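(* Let $\epsilon>0$ and let $E\subset\mathbb{R}^2$ be a measurable set with $[0,1]^2\subset E\subset[-\epsilon,1+\epsilon]^2$. Let $0<s''<s'<s<2s''$, and let $a,b$ be real numbers with $0\le a$, $a+s\le 1$, $0\le b-s$, $b\le 1$. Let $v,v',v''\in\mathbb{R}^2$ and suppose that $E_2(b-s,b)$ complements $E_1(a,a+s)+v$, $E_2(b-s',b)$ complements $E_1(a,a+s')+v'$, and $E_2(b-s'',b)$ complements $E_1(a,a+s'')+v''$. Then the points $v,v',v''$ are collinear. Moreover, if $v\neq v''$, the absolute value of the slope of the line through $v$ and $v''$ is at most $\epsilon(2s''-s)^{-1}$.
   Context: Coordinates in $\mathbb{R}^2$ are $(x_1,x_2)$. For $0\le c\le d\le 1$ define $E_1(c,d)=(E\cap\{c\le x_1\le d,\ x_2\le 0\})\cup\{c\le x_1\le d,\ x_2\ge 0\}$ and $E_2(c,d)=(E\cap\{c\le x_1\le d,\ x_2\ge 0\})\cup\{c\le x_1\le d,\ x_2\le 0\}$. Let $S_{c,d}=[c,d]\times\mathbb{R}$. For $v=(v_1,v_2)\in\mathbb{R}^2$ and $0\le c'\le d'\le 1$, we say that $E_2(c,d)$ complements $E_1(c',d')+v$ if, up to sets of Lebesgue measure zero, the sets $E_2(c,d)$ and $E_1(c',d')+v$ are disjoint and their union equals $S_{c,d}$ (so $E_1(c',d')+v$ sits above $E_2(c,d)$, and necessarily $c'+v_1=c$, $d'+v_1=d$). *)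

theory Defs
  imports "HOL-Analysis.Analysis"
begin

definition E1 :: "(real \<times> real) set \<Rightarrow> real \<Rightarrow> real \<Rightarrow> (real \<times> real) set" where
  "E1 E c d = (E \<inter> {x. c \<le> fst x \<and> fst x \<le> d \<and> snd x \<le> 0})
              \<union> {x. c \<le> fst x \<and> fst x \<le> d \<and> snd x \<ge> 0}"

definition E2 :: "(real \<times> real) set \<Rightarrow> real \<Rightarrow> real \<Rightarrow> (real \<times> real) set" where
  "E2 E c d = (E \<inter> {x. c \<le> fst x \<and> fst x \<le> d \<and> snd x \<ge> 0})
              \<union> {x. c \<le> fst x \<and> fst x \<le> d \<and> snd x \<le> 0}"

definition strip :: "real \<Rightarrow> real \<Rightarrow> (real \<times> real) set" where
  "strip c d = {x. c \<le> fst x \<and> fst x \<le> d}"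

definition complements ::
  "(real \<times> real) set \<Rightarrow> real \<Rightarrow> real \<Rightarrow> real \<Rightarrow> real \<Rightarrow> real \<times> real \<Rightarrow> bool" where
  "complements E c d c' d' v \<longleftrightarrow>
     (let A = E2 E c d; B = (\<lambda>x. x + v) ` E1 E c' d' in
       A \<inter> B \<in> null_sets lebesgue \<and>
       ((A \<union> B) - strip c d) \<union> (strip c d - (A \<union> B)) \<in> null_sets lebesgue)"

end

theory Submission
  imports Defs
begin

text \<open>Comparing areas in a column [p, q] \<times> [-R, R] of the strip, the complementing condition says that
  the mass of E above the axis over [p, q] plus the mass of E below the axis over the matching column
  [p - v1, q - v1] is v2 (q - p). Subtracting this identity for v and v'' shows that the lower mass
  L(x, y) of E over [x, y] satisfies L(x + t, y + t) = L(x, y) + D (y - x) with t = s - s'' and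
  D = v2 - v2'', and likewise with t' = s' - s'' and D'. As 0 \<le> L(x, y) \<le> \<epsilon> (y - x), combining
  the two shifts within a fixed window (which needs t < s'', i.e. s < 2 s'') forces D' t = D t', i.e.
  collinearity; comparing a column of width s'' with its shift by t bounds D by \<epsilon> t / s''.\<close>

text \<open>Walk forward by t' while staying in [a, b], and back by t - t' otherwise.\<close>
lemma translation_orbit:
  fixes h :: "real \<Rightarrow> real"
  assumes "0 < t'" "t' < t" "a + t \<le> b"
    and shift: "\<And>x. a \<le> x \<Longrightarrow> x \<le> b \<Longrightarrow> h (x + t) = h x + \<alpha>"
    and shift': "\<And>x. a \<le> x \<Longrightarrow> x \<le> b \<Longrightarrow> h (x + t') = h x + \<beta>"
  shows "\<exists>M::nat. a \<le> a + real n * t' - M * t \<and> a + real n * t' - M * t \<le> b \<and>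
           h (a + real n * t' - M * t) = h a + real n * \<beta> - M * \<alpha>"
proof (induction n)
  case 0
  show ?case using assms(1-3) by (intro exI[of _ 0]) auto
next
  case (Suc n)
  then obtain M :: nat where window: "a \<le> a + n * t' - M * t" "a + n * t' - M * t \<le> b"
    and hx: "h (a + n * t' - M * t) = h a + n * \<beta> - M * \<alpha>"
    by blast
  define x where "x = a + real n * t' - M * t"
  have fwd: "x + t' = a + real (Suc n) * t' - M * t"
    and bwd: "x + t' - t = a + real (Suc n) * t' - real (Suc M) * t"
    by (simp_all add: x_def algebra_simps)
  have step': "h (x + t') = h x + \<beta>" using shift' window by (simp add: x_def)
  show ?case
  proof (cases "x + t' \<le> b")
    case True
    have "h (x + t') = h a + real (Suc n) * \<beta> - M * \<alpha>"
      using step' hx by (simp add: x_def algebra_simps)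
    moreover have "a \<le> x + t'" using window assms(1) by (simp add: x_def)
    ultimately show ?thesis using True fwd by (intro exI[of _ M]) simp
  next
    case False
    have y: "a \<le> x + t' - t" "x + t' - t \<le> b" using False window assms(2,3) by (auto simp: x_def)
    then have "h (x + t') = h (x + t' - t) + \<alpha>" using shift[of "x + t' - t"] by simp
    then have "h (x + t' - t) = h a + real (Suc n) * \<beta> - real (Suc M) * \<alpha>"
      using step' hx by (simp add: x_def algebra_simps)
    then show ?thesis using y bwd by (intro exI[of _ "Suc M"]) simp
  qed
qed

lemma bounded_translation_increments_proportional:
  fixes h :: "real \<Rightarrow> real"
  assumes "0 < t'" "t' < t" "a + t \<le> b"
    and shift: "\<And>x. a \<le> x \<Longrightarrow> x \<le> b \<Longrightarrow> h (x + t) = h x + \<alpha>"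
    and shift': "\<And>x. a \<le> x \<Longrightarrow> x \<le> b \<Longrightarrow> h (x + t') = h x + \<beta>"
    and bounded: "\<And>x. \<bar>h x\<bar> \<le> K"
  shows "\<beta> * t = \<alpha> * t'"
proof (rule ccontr)
  assume "\<beta> * t \<noteq> \<alpha> * t'"
  then have "0 < \<bar>\<beta> * t - \<alpha> * t'\<bar>" by simp
  then obtain n :: nat where n: "t * (2 * K) + \<bar>\<alpha>\<bar> * (b - a) < n * \<bar>\<beta> * t - \<alpha> * t'\<bar>"
    using reals_Archimedean3 by blast
  obtain M :: nat where window: "a \<le> a + n * t' - M * t" "a + n * t' - M * t \<le> b"
    and hx: "h (a + n * t' - M * t) = h a + n * \<beta> - M * \<alpha>"
    using translation_orbit[OF assms(1-3) shift shift'] by blast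
  have inc: "\<bar>n * \<beta> - M * \<alpha>\<bar> \<le> 2 * K"
    using hx bounded[of a] bounded[of "a + n * t' - M * t"] by linarith
  have pos: "\<bar>n * t' - M * t\<bar> \<le> b - a" using window by linarith
  have "n * (\<beta> * t - \<alpha> * t') = t * (n * \<beta> - M * \<alpha>) - \<alpha> * (n * t' - M * t)"
    by (simp add: algebra_simps)
  then have "\<bar>n * (\<beta> * t - \<alpha> * t')\<bar>
      \<le> t * \<bar>n * \<beta> - M * \<alpha>\<bar> + \<bar>\<alpha>\<bar> * \<bar>n * t' - M * t\<bar>"
    using abs_triangle_ineq4[of "t * (n * \<beta> - M * \<alpha>)" "\<alpha> * (n * t' - M * t)"] assms(1,2)
    by (simp add: abs_mult)
  also have "\<dots> \<le> t * (2 * K) + \<bar>\<alpha>\<bar> * (b - a)"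
    using inc pos assms(1,2) by (intro add_mono mult_left_mono) auto
  finally show False using n by (simp add: abs_mult)
qed

lemma interval_shift_increments_proportional:
  fixes F :: "real \<Rightarrow> real \<Rightarrow> real"
  assumes "0 < t'" "t' < t" "t < S"
    and shift: "\<And>x y. a \<le> x \<Longrightarrow> x \<le> y \<Longrightarrow> y \<le> a + S \<Longrightarrow>
      F (x + t) (y + t) = F x y + D * (y - x)"
    and shift': "\<And>x y. a \<le> x \<Longrightarrow> x \<le> y \<Longrightarrow> y \<le> a + S \<Longrightarrow>
      F (x + t') (y + t') = F x y + D' * (y - x)"
    and nonneg: "\<And>p q. p \<le> q \<Longrightarrow> 0 \<le> F p q"
    and le: "\<And>p q. p \<le> q \<Longrightarrow> F p q \<le> e * (q - p)"
  shows "D' * t = D * t'"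
proof -
  define l where "l = S - t"
  have "l > 0" using assms(3) by (simp add: l_def)
  have "(D' * l) * t = (D * l) * t'"
  proof (rule bounded_translation_increments_proportional[where h = "\<lambda>x. F x (x + l)" and a = a and b = "a + t"])
    show "F (x + t) (x + t + l) = F x (x + l) + D * l" if "a \<le> x" "x \<le> a + t" for x
      using shift[of x "x + l"] that \<open>l > 0\<close> by (simp add: l_def algebra_simps)
    show "F (x + t') (x + t' + l) = F x (x + l) + D' * l" if "a \<le> x" "x \<le> a + t" for x
      using shift'[of x "x + l"] that \<open>l > 0\<close> by (simp add: l_def algebra_simps)
    show "\<bar>F x (x + l)\<bar> \<le> e * l" for x
      using nonneg[of x "x + l"] le[of x "x + l"] \<open>l > 0\<close> by simp
  qed (use assms(1,2) in auto)
  then show ?thesis using \<open>l > 0\<close> by simp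
qed

lemma interval_shift_increment_bound:
  fixes F :: "real \<Rightarrow> real \<Rightarrow> real"
  assumes "0 < t" "t < S"
    and shift: "F (a + t) (a + S + t) = F a (a + S) + D * S"
    and additive: "\<And>p q r. p \<le> q \<Longrightarrow> q \<le> r \<Longrightarrow> F p r = F p q + F q r"
    and nonneg: "\<And>p q. p \<le> q \<Longrightarrow> 0 \<le> F p q"
    and le: "\<And>p q. p \<le> q \<Longrightarrow> F p q \<le> e * (q - p)"
  shows "\<bar>D\<bar> * S \<le> e * t"
proof -
  have "F a (a + S + t) = F a (a + t) + F (a + t) (a + S + t)"
    and "F a (a + S + t) = F a (a + S) + F (a + S) (a + S + t)"
    using additive assms(1,2) by auto
  then have "D * S = F (a + S) (a + S + t) - F a (a + t)" using shift by simp
  moreover have "0 \<le> F (a + S) (a + S + t)" "F (a + S) (a + S + t) \<le> e * t"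
    and "0 \<le> F a (a + t)" "F a (a + t) \<le> e * t"
    using nonneg[of "a + S" "a + S + t"] le[of "a + S" "a + S + t"] nonneg[of a "a + t"] le[of a "a + t"]
      assms(1) by auto
  ultimately show ?thesis using assms(1,2) by (simp add: abs_mult)
qed

definition lower_mass :: "(real \<times> real) set \<Rightarrow> real \<Rightarrow> real \<Rightarrow> real" where
  "lower_mass E p q = measure lebesgue (E \<inter> ({p..q} \<times> {..0}))"

definition upper_mass :: "(real \<times> real) set \<Rightarrow> real \<Rightarrow> real \<Rightarrow> real" where
  "upper_mass E p q = measure lebesgue (E \<inter> ({p..q} \<times> {0..}))"

lemma measure_interval_times_interval:
  fixes p q y z :: real
  assumes "p \<le> q" "y \<le> z"
  shows "measure lebesgue ({p..q} \<times> {y..z}) = (q - p) * (z - y)"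
proof -
  have "{p..q} \<times> {y..z} = cbox (p, y) (q, z)" by (simp add: cbox_Pair_eq)
  then show ?thesis using assms by (simp add: content_Pair)
qed

lemma lmeasurable_interval_times_interval: "{p..q::real} \<times> {y..z::real} \<in> lmeasurable"
  by (metis cbox_Pair_eq interval_cbox lmeasurable_cbox)

lemma interval_times_interval_not_null:
  fixes p q y z :: real
  assumes "p < q" "y < z"
  shows "{p..q} \<times> {y..z} \<notin> null_sets lebesgue"
  using measure_eq_0_null_sets measure_interval_times_interval[of p q y z] assms by fastforce

lemma measure_Un_negligible_Int:
  assumes "S \<in> lmeasurable" "T \<in> lmeasurable" "negligible (S \<inter> T)"
  shows "measure lebesgue (S \<union> T) = measure lebesgue S + measure lebesgue T"
  using measure_Un3[OF assms(1,2)] negligible_imp_measure0[OF assms(3)] by simp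

lemma lmeasurable_Int_interval_times_closed:
  assumes "E \<in> sets lebesgue" "bounded E" "closed Y"
  shows "E \<inter> ({p..q::real} \<times> Y) \<in> lmeasurable"
proof -
  have "closed ({p..q} \<times> Y)" using assms(3) by (simp add: closed_Times)
  then show ?thesis using assms(1,2) by (intro bounded_set_imp_lmeasurable) (auto intro: bounded_Int)
qed

lemma negligible_fst_eq: "negligible {x :: real \<times> real. fst x = q}"
  using negligible_hyperplane[of "(1, 0) :: real \<times> real" q] by (simp add: inner_prod_def zero_prod_def)

lemma negligible_snd_eq: "negligible {x :: real \<times> real. snd x = q}"
  using negligible_hyperplane[of "(0, 1) :: real \<times> real" q] by (simp add: inner_prod_def zero_prod_def)

lemma lower_mass_le:
  assumes "E \<in> sets lebesgue" "bounded E" "0 \<le> e" "\<And>x. x \<in> E \<Longrightarrow> -e \<le> snd x" "p \<le> q"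
  shows "lower_mass E p q \<le> e * (q - p)"
proof -
  have "lower_mass E p q \<le> measure lebesgue ({p..q} \<times> {-e..0})"
    unfolding lower_mass_def using assms(1,2,4) lmeasurable_Int_interval_times_closed[OF assms(1,2)]
    by (intro measure_mono_fmeasurable) (auto intro: fmeasurableD lmeasurable_interval_times_interval)
  also have "\<dots> = e * (q - p)" using assms(3,5) by (simp add: measure_interval_times_interval)
  finally show ?thesis .
qed

lemma lower_mass_additive:
  assumes "E \<in> sets lebesgue" "bounded E" "p \<le> q" "q \<le> r"
  shows "lower_mass E p r = lower_mass E p q + lower_mass E q r"
proof -
  have "E \<inter> ({p..r} \<times> {..0}) = E \<inter> ({p..q} \<times> {..0}) \<union> E \<inter> ({q..r} \<times> {..0})"
    using assms(3,4) by auto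
  moreover have "negligible (E \<inter> ({p..q} \<times> {..0}) \<inter> (E \<inter> ({q..r} \<times> {..0})))"
    by (rule negligible_subset[OF negligible_fst_eq[of q]]) auto
  ultimately show ?thesis unfolding lower_mass_def using assms(1,2)
    by (simp add: measure_Un_negligible_Int lmeasurable_Int_interval_times_closed)
qed

lemma measure_lower_box_Un_upper_part:
  assumes "E \<in> sets lebesgue" "bounded E" "p \<le> q" "0 \<le> R"
  shows "measure lebesgue ({p..q} \<times> {-R..0} \<union> E \<inter> ({p..q} \<times> {0..}))
    = R * (q - p) + upper_mass E p q"
proof -
  have "negligible ({p..q} \<times> {-R..0} \<inter> (E \<inter> ({p..q} \<times> {0..})))"
    by (rule negligible_subset[OF negligible_snd_eq[of 0]]) auto
  then show ?thesis unfolding upper_mass_def using assms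
    by (simp add: measure_Un_negligible_Int lmeasurable_Int_interval_times_closed
        lmeasurable_interval_times_interval measure_interval_times_interval)
qed

lemma measure_upper_box_Un_lower_part:
  assumes "E \<in> sets lebesgue" "bounded E" "p \<le> q" "0 \<le> R"
  shows "measure lebesgue ({p..q} \<times> {0..R} \<union> E \<inter> ({p..q} \<times> {..0}))
    = R * (q - p) + lower_mass E p q"
proof -
  have "negligible ({p..q} \<times> {0..R} \<inter> (E \<inter> ({p..q} \<times> {..0})))"
    by (rule negligible_subset[OF negligible_snd_eq[of 0]]) auto
  then show ?thesis unfolding lower_mass_def using assms
    by (simp add: measure_Un_negligible_Int lmeasurable_Int_interval_times_closed
        lmeasurable_interval_times_interval measure_interval_times_interval mult.commute)
qed

lemma bounded_imp_snd_bound: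
  fixes E :: "(real \<times> real) set"
  assumes "bounded E"
  obtains K where "0 < K" "\<And>x. x \<in> E \<Longrightarrow> \<bar>snd x\<bar> \<le> K"
proof -
  obtain K where K: "0 < K" "\<And>x. x \<in> E \<Longrightarrow> norm x \<le> K" using assms bounded_pos by metis
  have "\<bar>snd x\<bar> \<le> K" if "x \<in> E" for x
    using norm_snd_le[of "snd x" "fst x"] K(2)[OF that] by simp
  then show ?thesis using that K(1) by blast
qed

lemma complements_fst:
  assumes "bounded E" "complements E c d c' d' v" "c < d" "d - c = d' - c'"
  shows "fst v = c - c'"
proof -
  obtain v1 v2 where v: "v = (v1, v2)" by fastforce
  define A where "A = E2 E c d"
  define B where "B = (\<lambda>x. x + v) ` E1 E c' d'"
  define Z where "Z = ((A \<union> B) - strip c d) \<union> (strip c d - (A \<union> B))"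
  have "Z \<in> null_sets lebesgue"
    using assms(2) by (simp add: complements_def Let_def A_def B_def Z_def)
  then have no_box: False if "{p..q} \<times> {y..z} \<subseteq> Z" "p < q" "y < z" for p q y z
    using interval_times_interval_not_null[OF that(2,3)] null_sets_subset that(1)
      fmeasurableD[OF lmeasurable_interval_times_interval] by metis
  \<comment> \<open>If v1 is too large, the translated upper half-strip leaves the strip on the right; if it is
    too small, a thin column at the right end of the strip is covered by neither set above E.\<close>
  consider "c - c' < v1" | "v1 < c - c'" | "v1 = c - c'" by linarith
  then show ?thesis
  proof cases
    case 1
    define \<delta> where "\<delta> = min (v1 - (c - c')) (d - c)"
    have \<delta>: "0 < \<delta>" "\<delta> \<le> v1 - (c - c')" "\<delta> \<le> d - c"
      using 1 assms(3) by (auto simp: \<delta>_def)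
    have box: "{d' + v1 - \<delta>/2..d' + v1} \<times> {v2..v2 + 1} \<subseteq> Z"
    proof
      fix x assume x: "x \<in> {d' + v1 - \<delta>/2..d' + v1} \<times> {v2..v2 + 1}"
      have "x - v \<in> E1 E c' d'" using x \<delta> assms(4) by (auto simp: E1_def v)
      then have "x \<in> B" unfolding B_def by (rule rev_image_eqI) simp
      moreover have "x \<notin> strip c d" using x \<delta> assms(4) by (auto simp: strip_def)
      ultimately show "x \<in> Z" by (simp add: Z_def)
    qed
    show ?thesis using no_box[OF box] \<delta>(1) by simp
  next
    case 2
    define \<delta> where "\<delta> = min ((c - c') - v1) (d - c)"
    have \<delta>: "0 < \<delta>" "\<delta> \<le> (c - c') - v1" "\<delta> \<le> d - c"
      using 2 assms(3) by (auto simp: \<delta>_def)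
    obtain K where K: "0 < K" "\<And>x. x \<in> E \<Longrightarrow> \<bar>snd x\<bar> \<le> K"
      using bounded_imp_snd_bound[OF assms(1)] by blast
    have box: "{d - \<delta>/2..d} \<times> {K + 1..K + 2} \<subseteq> Z"
    proof
      fix x assume x: "x \<in> {d - \<delta>/2..d} \<times> {K + 1..K + 2}"
      have "x \<notin> A" using x K by (force simp: A_def E2_def)
      moreover have "x \<notin> B"
      proof
        assume "x \<in> B"
        then obtain z where z: "z \<in> E1 E c' d'" "x = z + v" by (auto simp: B_def)
        have "fst z \<le> d'" using z(1) by (auto simp: E1_def)
        moreover have "fst x = fst z + v1" using z(2) by (simp add: v)
        moreover have "d - \<delta>/2 \<le> fst x" using x by (auto simp: mem_Times_iff)
        ultimately show False using \<delta> assms(4) by linarith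
      qed
      moreover have "x \<in> strip c d" using x \<delta> by (auto simp: strip_def)
      ultimately show "x \<in> Z" by (simp add: Z_def)
    qed
    show ?thesis using no_box[OF box] \<delta>(1) by simp
  qed (simp add: v)
qed

lemma complements_column_masses:
  assumes "E \<in> sets lebesgue" "bounded E" "complements E c d c' d' v" "c < d" "d - c = d' - c'"
    and "c' \<le> x" "x \<le> y" "y \<le> d'"
  shows "upper_mass E (x + (c - c')) (y + (c - c')) + lower_mass E x y = snd v * (y - x)"
proof -
  obtain v2 where v: "v = (c - c', v2)"
    using complements_fst[OF assms(2-5)] by (metis prod.collapse)
  define p q where "p = x + (c - c')" and "q = y + (c - c')"
  define A where "A = E2 E c d"
  define B where "B = (\<lambda>z. z + v) ` E1 E c' d'"
  define Z where "Z = ((A \<union> B) - strip c d) \<union> (strip c d - (A \<union> B))"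
  have Z: "Z \<in> null_sets lebesgue" and AB: "A \<inter> B \<in> null_sets lebesgue"
    using assms(3) by (simp_all add: complements_def Let_def A_def B_def Z_def)
  obtain K where K: "0 < K" "\<And>z. z \<in> E \<Longrightarrow> \<bar>snd z\<bar> \<le> K"
    using bounded_imp_snd_bound[OF assms(2)] by blast
  define R where "R = K + \<bar>v2\<bar>"
  have "0 < R" using K(1) by (simp add: R_def)
  define Q where "Q = {p..q} \<times> {-R..R}"
  have QA: "Q \<inter> A = {p..q} \<times> {-R..0} \<union> E \<inter> ({p..q} \<times> {0..})"
    using K assms(5-8) by (fastforce simp: Q_def A_def E2_def p_def q_def R_def)
  have "E1 E c' d' \<inter> {z. z + v \<in> Q} = {x..y} \<times> {0..R - v2} \<union> E \<inter> ({x..y} \<times> {..0})"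
    using K assms(5-8) by (fastforce simp: Q_def E1_def p_def q_def R_def v)
  moreover have "Q \<inter> B = (+) v ` (E1 E c' d' \<inter> {z. z + v \<in> Q})"
    unfolding B_def by (auto simp: add.commute)
  ultimately have QB: "Q \<inter> B = (+) v ` ({x..y} \<times> {0..R - v2} \<union> E \<inter> ({x..y} \<times> {..0}))"
    by simp
  have "Q \<inter> A \<union> Q \<inter> B = Q - Z"
    using assms(5-8) by (auto simp: Z_def Q_def strip_def p_def q_def)
  then have "measure lebesgue (Q \<inter> A \<union> Q \<inter> B) = measure lebesgue Q"
    using measure_Diff_null_set[OF _ Z] fmeasurableD[OF lmeasurable_interval_times_interval]
    by (simp add: Q_def)
  also have "\<dots> = 2 * R * (q - p)"
    using \<open>0 < R\<close> assms(7) by (simp add: Q_def measure_interval_times_interval p_def q_def)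
  finally have "measure lebesgue (Q \<inter> A \<union> Q \<inter> B) = 2 * R * (q - p)" .
  moreover have "measure lebesgue (Q \<inter> A \<union> Q \<inter> B)
      = measure lebesgue (Q \<inter> A) + measure lebesgue (Q \<inter> B)"
  proof (rule measure_Un_negligible_Int)
    show "Q \<inter> A \<in> lmeasurable" unfolding QA
      using lmeasurable_Int_interval_times_closed[OF assms(1,2) closed_atLeast]
      by (rule fmeasurable.Un[OF lmeasurable_interval_times_interval])
    show "Q \<inter> B \<in> lmeasurable" unfolding QB
      using lmeasurable_Int_interval_times_closed[OF assms(1,2) closed_atMost]
      by (intro measurable_translation fmeasurable.Un[OF lmeasurable_interval_times_interval])
    have "negligible (A \<inter> B)" using AB by (simp add: negligible_iff_null_sets)
    then show "negligible (Q \<inter> A \<inter> (Q \<inter> B))" by (rule negligible_subset) auto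
  qed
  moreover have "measure lebesgue (Q \<inter> A) = R * (q - p) + upper_mass E p q"
    unfolding QA using assms(1,2,7) \<open>0 < R\<close>
    by (intro measure_lower_box_Un_upper_part) (auto simp: p_def q_def)
  moreover have "measure lebesgue (Q \<inter> B) = (R - v2) * (y - x) + lower_mass E x y"
    unfolding QB measure_translation using assms(1,2,7) K(1)
    by (intro measure_upper_box_Un_lower_part) (auto simp: R_def)
  ultimately show ?thesis by (simp add: v p_def q_def algebra_simps)
qed

lemma complements_lower_mass_shift:
  assumes "E \<in> sets lebesgue" "bounded E" "0 < r" "r < s"
    and "complements E (b - s) b a (a + s) v" "complements E (b - r) b a (a + r) w"
    and "a \<le> x" "x \<le> y" "y \<le> a + r"
  shows "lower_mass E (x + (s - r)) (y + (s - r)) = lower_mass E x y + (snd v - snd w) * (y - x)"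
proof -
  have "upper_mass E (x + (b - r - a)) (y + (b - r - a)) + lower_mass E (x + (s - r)) (y + (s - r))
      = snd v * (y - x)"
    using complements_column_masses[OF assms(1,2,5), of "x + (s - r)" "y + (s - r)"] assms(3,4,7-9)
    by (simp add: algebra_simps)
  moreover have "upper_mass E (x + (b - r - a)) (y + (b - r - a)) + lower_mass E x y = snd w * (y - x)"
    using complements_column_masses[OF assms(1,2,6), of x y] assms(3,4,7-9) by (simp add: algebra_simps)
  ultimately show ?thesis by (simp add: algebra_simps)
qed

lemma complements_vertical_shifts:
  assumes "E \<in> sets lebesgue" "bounded E" "0 \<le> e" "\<And>z. z \<in> E \<Longrightarrow> -e \<le> snd z"
    and "0 < s''" "s'' < s'" "s' < s" "s < 2 * s''"
    and "complements E (b - s) b a (a + s) v"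
    and "complements E (b - s') b a (a + s') v'"
    and "complements E (b - s'') b a (a + s'') v''"
  shows "(snd v' - snd v'') * (s - s'') = (snd v - snd v'') * (s' - s'')"
    and "\<bar>snd v - snd v''\<bar> * s'' \<le> e * (s - s'')"
proof -
  note shift = complements_lower_mass_shift[OF assms(1,2) _ _ assms(9,11)]
  note shift' = complements_lower_mass_shift[OF assms(1,2) _ _ assms(10,11)]
  have nonneg: "0 \<le> lower_mass E p q" for p q by (simp add: lower_mass_def)
  note le = lower_mass_le[OF assms(1-4)]
  note additive = lower_mass_additive[OF assms(1,2)]
  show "(snd v' - snd v'') * (s - s'') = (snd v - snd v'') * (s' - s'')"
    by (rule interval_shift_increments_proportional[OF _ _ _ shift shift' nonneg le])
      (use assms(5-8) in auto)
  have "lower_mass E (a + (s - s'')) (a + s'' + (s - s''))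
      = lower_mass E a (a + s'') + (snd v - snd v'') * s''"
    using shift[of a "a + s''"] assms(5-8) by simp
  then show "\<bar>snd v - snd v''\<bar> * s'' \<le> e * (s - s'')"
    by (rule interval_shift_increment_bound[OF _ _ _ additive nonneg le, rotated 2])
      (use assms(5-8) in auto)
qed

theorem lemma3p1:
  fixes E :: "(real \<times> real) set" and \<epsilon> s s' s'' a b :: real
    and v v' v'' :: "real \<times> real"
  assumes "\<epsilon> > 0"
    and "E \<in> sets lebesgue"
    and "{0..1} \<times> {0..1} \<subseteq> E"
    and "E \<subseteq> {-\<epsilon>..1+\<epsilon>} \<times> {-\<epsilon>..1+\<epsilon>}"
    and "0 < s''" "s'' < s'" "s' < s" "s < 2 * s''"
    and "0 \<le> a" "a + s \<le> 1" "0 \<le> b - s" "b \<le> 1"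
    and "complements E (b - s) b a (a + s) v"
    and "complements E (b - s') b a (a + s') v'"
    and "complements E (b - s'') b a (a + s'') v''"
  shows "collinear {v, v', v''} \<and>
         (v \<noteq> v'' \<longrightarrow> fst v'' \<noteq> fst v \<and>
            \<bar>(snd v'' - snd v) / (fst v'' - fst v)\<bar> \<le> \<epsilon> / (2 * s'' - s))"
proof -
  have "bounded ({-\<epsilon>..1+\<epsilon>} \<times> {-\<epsilon>..1+\<epsilon>})" by (intro bounded_Times) auto
  then have bounded: "bounded E" using assms(4) by (rule bounded_subset)
  have "-\<epsilon> \<le> snd z" if "z \<in> E" for z using assms(4) that by (auto simp: mem_Times_iff)
  note shifts = complements_vertical_shifts[OF assms(2) bounded _ this assms(5-8,13-15)]
  have fst: "fst v = b - s - a" "fst v' = b - s' - a" "fst v'' = b - s'' - a"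
    using assms(5-8) complements_fst[OF bounded assms(13)] complements_fst[OF bounded assms(14)]
      complements_fst[OF bounded assms(15)] by simp_all
  define u where "u = (s' - s'') / (s - s'')"
  have "s' = s'' + u * (s - s'')" "snd v' - snd v'' = u * (snd v - snd v'')"
    using shifts(1) assms(1,6,7) by (simp_all add: u_def field_simps)
  then have "fst v' = u * fst v + (1 - u) * fst v''" "snd v' = u * snd v + (1 - u) * snd v''"
    unfolding fst by (simp_all add: algebra_simps)
  then have "v' = u *\<^sub>R v + (1 - u) *\<^sub>R v''" by (simp add: prod_eq_iff)
  then have "collinear {v, v', v''}" by (auto simp: collinear_3_expand)
  moreover have "\<bar>(snd v'' - snd v) / (fst v'' - fst v)\<bar> = \<bar>snd v - snd v''\<bar> / (s - s'')"
    using fst assms(6,7) by (simp add: abs_minus_commute)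
  moreover have "\<bar>snd v - snd v''\<bar> / (s - s'') \<le> \<epsilon> / s''"
    using shifts(2) assms(1,5-7) by (simp add: field_simps)
  moreover have "\<epsilon> / s'' \<le> \<epsilon> / (2 * s'' - s)"
    using assms(1,5-8) by (intro divide_left_mono) auto
  ultimately show ?thesis using fst assms(5-7) by simp
qed

end
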